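(* Let $\mathcal{K}=\{1,\dots,K\}$ and $\mathcal{N}=\{1,\dots,N\}$, and let all constants be as described in the context. For each $k\in\mathcal{K}$ let $k'\in\arg\max_{n\in\mathcal{N}} g_{k,n}$. Consider problem (P1): maximize over $\{p_n\},\{p_{k,n}\},\{b_{k,n}\},\{x_k\},\{q_k\},\{w_k\}$ the ratio $$\frac{\sum_{n=1}^N \rho(B^n_{SC},p_n,g_n)+\sum_{k=1}^K\sum_{n=1}^N x_k\,\rho(b_{k,n},p_{k,n},g_{k,n})}{\sum_{n=1}^N \frac{p_n}{\xi}+\sum_{n=1}^N\sum_{k=1}^K x_k\frac{p_{k,n}}{\xi}+\sum_{k=1}^K x_k\frac{q_k}{\xi}+P_{\rm c}}$$ subject to C1: $\sum_{n} p_n+\sum_{n}\sum_{k} p_{k,n}+\sum_k q_k\le P^{SC}_{\max}$; C2: $\sum_{n} b_{k,n}+w_k\le x_k W^k_{MC}$ for all $k\in\mathcal{K}$; C3: $\rho(w_k,q_k,h_k)\ge x_k R^k_{MC}$ for all $k\in\mathcal{K}$; C4: $\sum_{n}\rho(B^n_{SC},p_n,g_n)+\sum_k\sum_n x_k\rho(b_{k,n},p_{k,n},g_{k,n})\ge R^{SC}_{\min}$; C5: $x_k\in\{0,1\}$ for all $k$; C6: $b_{k,n}\ge0$, $w_k\ge0$ for all $k,n$; C7: $p_n\ge0$, $p_{k,n}\ge0$, $q_k\ge0$ for all $k,n$. Consider problem (P2): maximize over $\{p_n\},\{p_{k,k'}\},\{b_{k,k'}\},\{x_k\},\{q_k\},\{w_k\}$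 the ratio $$\frac{\sum_{n=1}^N \rho(B^n_{SC},p_n,g_n)+\sum_{k=1}^K x_k\,\rho(b_{k,k'},p_{k,k'},g_{k,k'})}{\sum_{n=1}^N \frac{p_n}{\xi}+\sum_{k=1}^K x_k\frac{p_{k,k'}}{\xi}+\sum_{k=1}^K x_k\frac{q_k}{\xi}+P_{\rm c}}$$ subject to C1: $\sum_n p_n+\sum_k p_{k,k'}+\sum_k q_k\le P^{SC}_{\max}$; C2: $b_{k,k'}+w_k= x_kW^k_{MC}$ for all $k$; C3: $\rho(w_k,q_k,h_k)= x_kR^k_{MC}$ for all $k$; C4: $\sum_n\rho(B^n_{SC},p_n,g_n)+\sum_k x_k\rho(b_{k,k'},p_{k,k'},g_{k,k'})\ge R^{SC}_{\min}$; together with $x_k\in\{0,1\}$, $b_{k,k'}\ge0$, $w_k\ge0$, $p_n\ge0$, $p_{k,k'}\ge0$, $q_k\ge0$. Then the optimal solution of (P1) is equivalent to that of (P2): the optimal values of (P1) and (P2) coincide, and an optimal solution of (P2), extended by setting $b_{k,n}=0$ and $p_{k,n}=0$ for all $n\neq k'$, is an optimal solution of (P1). In particular, at an optimum of (P1) the bandwidth $W^k_{MC}$ of each MU $k$ is shared with at most one SU, namely SU $k'$.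
   Context: Setting: a small cell (SC) base station serves small-cell users (SUs) indexed by $\mathcal{N}=\{1,\dots,N\}$ and may additionally serve macro-cell users (MUs) indexed by $\mathcal{K}=\{1,\dots,K\}$. Given constants: noise spectral density $N_0>0$; power amplifier efficiency $\xi\in(0,1]$; circuit power $P_{\rm c}>0$; maximum transmit power $P^{SC}_{\max}>0$; minimum SC system rate $R^{SC}_{\min}\ge0$. For each MU $k$: licensed bandwidth $W^k_{MC}>0$, minimum rate $R^k_{MC}>0$, channel power gain $h_k>0$ from the SC to MU $k$, and channel power gains $g_{k,n}>0$ from the SC to SU $n$ on MU $k$'s bandwidth. For each SU $n$: licensed bandwidth $B^n_{SC}>0$ and channel power gain $g_n>0$ on it. For $b\ge0$, $p\ge0$, $g>0$ define the rate $\rho(b,p,g)=b\log_2\!\big(1+\frac{pg}{bN_0}\big)$, with $\rho(0,p,g)=0$. Variables: $x_k$ indicates whether MU $k$ is served; $w_k,q_k$ are the bandwidth and power used to serve MU $k$; $b_{k,n},p_{k,n}$ are the bandwidth taken from MU $k$'s band and power used for SU $n$; $p_n$ is the power for SU $n$ on its own band. *)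

theory Defs
  imports Complex_Main
begin

definition rho :: "real \<Rightarrow> real \<Rightarrow> real \<Rightarrow> real \<Rightarrow> real" where
  "rho N0 b p g = (if b = 0 then 0 else b * log 2 (1 + p * g / (b * N0)))"

definition num1 where
  "num1 K N N0 B g gkn pn pkn bkn x =
     (\<Sum>n\<in>{1..N}. rho N0 (B n) (pn n) (g n))
   + (\<Sum>k\<in>{1..K}. \<Sum>n\<in>{1..N}. x k * rho N0 (bkn k n) (pkn k n) (gkn k n))"

definition obj1 :: "nat \<Rightarrow> nat \<Rightarrow> real \<Rightarrow> real \<Rightarrow> real \<Rightarrow> (nat \<Rightarrow> real) \<Rightarrow> (nat \<Rightarrow> real)
    \<Rightarrow> (nat \<Rightarrow> nat \<Rightarrow> real) \<Rightarrow> (nat \<Rightarrow> real) \<Rightarrow> (nat \<Rightarrow> nat \<Rightarrow> real) \<Rightarrow> (nat \<Rightarrow> nat \<Rightarrow> real)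
    \<Rightarrow> (nat \<Rightarrow> real) \<Rightarrow> (nat \<Rightarrow> real) \<Rightarrow> (nat \<Rightarrow> real) \<Rightarrow> real" where
  "obj1 K N N0 xi Pc B g gkn pn pkn bkn x q w =
     num1 K N N0 B g gkn pn pkn bkn x /
     ((\<Sum>n\<in>{1..N}. pn n / xi)
      + (\<Sum>n\<in>{1..N}. \<Sum>k\<in>{1..K}. x k * pkn k n / xi)
      + (\<Sum>k\<in>{1..K}. x k * q k / xi) + Pc)"

definition feas1 :: "nat \<Rightarrow> nat \<Rightarrow> real \<Rightarrow> real \<Rightarrow> real \<Rightarrow> (nat \<Rightarrow> real) \<Rightarrow> (nat \<Rightarrow> real)
    \<Rightarrow> (nat \<Rightarrow> real) \<Rightarrow> (nat \<Rightarrow> real) \<Rightarrow> (nat \<Rightarrow> real) \<Rightarrow> (nat \<Rightarrow> nat \<Rightarrow> real)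
    \<Rightarrow> (nat \<Rightarrow> real) \<Rightarrow> (nat \<Rightarrow> nat \<Rightarrow> real) \<Rightarrow> (nat \<Rightarrow> nat \<Rightarrow> real)
    \<Rightarrow> (nat \<Rightarrow> real) \<Rightarrow> (nat \<Rightarrow> real) \<Rightarrow> (nat \<Rightarrow> real) \<Rightarrow> bool" where
  "feas1 K N N0 Pmax Rmin W RMC h B g gkn pn pkn bkn x q w \<longleftrightarrow>
     (\<Sum>n\<in>{1..N}. pn n) + (\<Sum>n\<in>{1..N}. \<Sum>k\<in>{1..K}. pkn k n) + (\<Sum>k\<in>{1..K}. q k) \<le> Pmax
   \<and> (\<forall>k\<in>{1..K}. (\<Sum>n\<in>{1..N}. bkn k n) + w k \<le> x k * W k)
   \<and> (\<forall>k\<in>{1..K}. rho N0 (w k) (q k) (h k) \<ge> x k * RMC k)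
   \<and> num1 K N N0 B g gkn pn pkn bkn x \<ge> Rmin
   \<and> (\<forall>k\<in>{1..K}. x k \<in> {0, 1})
   \<and> (\<forall>k\<in>{1..K}. \<forall>n\<in>{1..N}. bkn k n \<ge> 0) \<and> (\<forall>k\<in>{1..K}. w k \<ge> 0)
   \<and> (\<forall>n\<in>{1..N}. pn n \<ge> 0) \<and> (\<forall>k\<in>{1..K}. \<forall>n\<in>{1..N}. pkn k n \<ge> 0)
   \<and> (\<forall>k\<in>{1..K}. q k \<ge> 0)"

text \<open>Problem (P2). kp k = k'. Variables: pn n = p_n, pk k = p_{k,k'}, bk k = b_{k,k'},
  x k, q k, w k.\<close>

definition num2 where
  "num2 K N N0 B g gkn kp pn pk bk x =
     (\<Sum>n\<in>{1..N}. rho N0 (B n) (pn n) (g n))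
   + (\<Sum>k\<in>{1..K}. x k * rho N0 (bk k) (pk k) (gkn k (kp k)))"

definition obj2 :: "nat \<Rightarrow> nat \<Rightarrow> real \<Rightarrow> real \<Rightarrow> real \<Rightarrow> (nat \<Rightarrow> real) \<Rightarrow> (nat \<Rightarrow> real)
    \<Rightarrow> (nat \<Rightarrow> nat \<Rightarrow> real) \<Rightarrow> (nat \<Rightarrow> nat) \<Rightarrow> (nat \<Rightarrow> real) \<Rightarrow> (nat \<Rightarrow> real) \<Rightarrow> (nat \<Rightarrow> real)
    \<Rightarrow> (nat \<Rightarrow> real) \<Rightarrow> (nat \<Rightarrow> real) \<Rightarrow> (nat \<Rightarrow> real) \<Rightarrow> real" where
  "obj2 K N N0 xi Pc B g gkn kp pn pk bk x q w =
     num2 K N N0 B g gkn kp pn pk bk x /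
     ((\<Sum>n\<in>{1..N}. pn n / xi)
      + (\<Sum>k\<in>{1..K}. x k * pk k / xi)
      + (\<Sum>k\<in>{1..K}. x k * q k / xi) + Pc)"

definition feas2 :: "nat \<Rightarrow> nat \<Rightarrow> real \<Rightarrow> real \<Rightarrow> real \<Rightarrow> (nat \<Rightarrow> real) \<Rightarrow> (nat \<Rightarrow> real)
    \<Rightarrow> (nat \<Rightarrow> real) \<Rightarrow> (nat \<Rightarrow> real) \<Rightarrow> (nat \<Rightarrow> real) \<Rightarrow> (nat \<Rightarrow> nat \<Rightarrow> real) \<Rightarrow> (nat \<Rightarrow> nat)
    \<Rightarrow> (nat \<Rightarrow> real) \<Rightarrow> (nat \<Rightarrow> real) \<Rightarrow> (nat \<Rightarrow> real)
    \<Rightarrow> (nat \<Rightarrow> real) \<Rightarrow> (nat \<Rightarrow> real) \<Rightarrow> (nat \<Rightarrow> real) \<Rightarrow> bool" where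
  "feas2 K N N0 Pmax Rmin W RMC h B g gkn kp pn pk bk x q w \<longleftrightarrow>
     (\<Sum>n\<in>{1..N}. pn n) + (\<Sum>k\<in>{1..K}. pk k) + (\<Sum>k\<in>{1..K}. q k) \<le> Pmax
   \<and> (\<forall>k\<in>{1..K}. bk k + w k = x k * W k)
   \<and> (\<forall>k\<in>{1..K}. rho N0 (w k) (q k) (h k) = x k * RMC k)
   \<and> num2 K N N0 B g gkn kp pn pk bk x \<ge> Rmin
   \<and> (\<forall>k\<in>{1..K}. x k \<in> {0, 1})
   \<and> (\<forall>k\<in>{1..K}. bk k \<ge> 0) \<and> (\<forall>k\<in>{1..K}. w k \<ge> 0)
   \<and> (\<forall>n\<in>{1..N}. pn n \<ge> 0) \<and> (\<forall>k\<in>{1..K}. pk k \<ge> 0)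
   \<and> (\<forall>k\<in>{1..K}. q k \<ge> 0)"

definition ext :: "(nat \<Rightarrow> nat) \<Rightarrow> (nat \<Rightarrow> real) \<Rightarrow> nat \<Rightarrow> nat \<Rightarrow> real" where
  "ext kp v k n = (if n = kp k then v k else 0)"

end

theory Submission imports Defs begin

text \<open>The rate \<open>b log\<^sub>2(1 + p G/(b N\<^sub>0))\<close> is the perspective of a concave function of the
  power, so for a fixed gain it is jointly concave and positively homogeneous in the pair
  (bandwidth, power), hence superadditive.  All bandwidth and power that (P1) takes from MU k's band
  can therefore be pooled onto the strongest SU k' together with the unused rest of the band without
  lowering the rate, and by the intermediate value theorem the MU power can be lowered until the MU's
  rate constraint is tight, which only lowers the consumed power.  So every feasible point of (P1) is
  dominated by a feasible point of (P2), and conversely every feasible point of (P2) extends to one of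
  (P1) with the same energy efficiency.\<close>

lemma rho_zero_bandwidth [simp]: "rho N0 0 p g = 0"
  by (simp add: rho_def)

lemma rho_zero_power [simp]: "rho N0 b 0 g = 0"
  by (simp add: rho_def)

lemma rho_mono_gain:
  assumes "0 \<le> b" "0 \<le> p" "0 \<le> g" "g \<le> g'" "0 < N0"
  shows "rho N0 b p g \<le> rho N0 b p g'"
proof (cases "b = 0")
  case False
  with assms have b: "0 < b" by simp
  have "0 \<le> p * g / (b * N0)" "p * g / (b * N0) \<le> p * g' / (b * N0)"
    using assms b by (auto intro!: divide_right_mono mult_left_mono)
  then have "log 2 (1 + p * g / (b * N0)) \<le> log 2 (1 + p * g' / (b * N0))"
    by (subst log_le_cancel_iff) auto
  with b show ?thesis by (simp add: rho_def mult_left_mono)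
qed simp

text \<open>The tangent of \<open>ln\<close> at \<open>U\<close>, transported to the perspective function.\<close>
lemma rho_le_tangent:
  assumes "0 \<le> b" "0 \<le> p" "0 \<le> G" "0 < N0" "0 < U"
  shows "rho N0 b p G \<le> (b * ln U + (b + p * G / N0 - b * U) / U) / ln 2"
proof (cases "b = 0")
  case False
  with assms have b: "0 < b" by simp
  define u where "u = 1 + p * G / (b * N0)"
  have u: "0 < u" unfolding u_def using assms b by (simp add: add_pos_nonneg)
  have "ln u - ln U \<le> u / U - 1"
    using ln_le_minus_one[of "u / U"] u assms by (simp add: ln_div)
  then have "b * (ln u - ln U) \<le> b * (u / U - 1)"
    using b by (intro mult_left_mono) auto
  moreover have "b * u = b + p * G / N0"
    unfolding u_def using b by (simp add: field_simps)
  ultimately have "b * ln u \<le> b * ln U + (b + p * G / N0 - b * U) / U"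
    using assms by (simp add: field_simps)
  then show ?thesis
    using b unfolding rho_def u_def log_def by (simp add: divide_right_mono)
qed (use assms in simp)

text \<open>Compare each summand with the tangent at the pooled SNR; the tangent terms add up
  and are exact for the pooled pair.\<close>
lemma sum_rho_le_rho_sum:
  assumes "finite I" "\<And>i. i \<in> I \<Longrightarrow> 0 \<le> b i \<and> 0 \<le> p i" "0 \<le> G" "0 < N0"
  shows "(\<Sum>i\<in>I. rho N0 (b i) (p i) G) \<le> rho N0 (\<Sum>i\<in>I. b i) (\<Sum>i\<in>I. p i) G"
proof (cases "(\<Sum>i\<in>I. b i) = 0")
  case True
  then have "\<forall>i\<in>I. b i = 0" using assms sum_nonneg_eq_0_iff by blast
  then show ?thesis by simp
next
  case False
  define Bs Ps where "Bs = (\<Sum>i\<in>I. b i)" and "Ps = (\<Sum>i\<in>I. p i)"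
  have Bs: "0 < Bs" using False assms unfolding Bs_def by (simp add: order_less_le sum_nonneg)
  have Ps: "0 \<le> Ps" unfolding Ps_def using assms by (simp add: sum_nonneg)
  define U where "U = 1 + Ps * G / (Bs * N0)"
  have U: "0 < U" unfolding U_def using assms Bs Ps by (simp add: add_pos_nonneg)
  have "(\<Sum>i\<in>I. rho N0 (b i) (p i) G)
      \<le> (\<Sum>i\<in>I. (b i * ln U + (b i + p i * G / N0 - b i * U) / U) / ln 2)"
    using assms U by (intro sum_mono rho_le_tangent) auto
  also have "\<dots> = (Bs * ln U + (Bs + Ps * G / N0 - Bs * U) / U) / ln 2"
    unfolding Bs_def Ps_def
    by (simp add: sum_divide_distrib[symmetric] sum.distrib sum_distrib_right[symmetric]
        sum_distrib_left[symmetric] sum_subtractf algebra_simps)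
  also have "Bs + Ps * G / N0 - Bs * U = 0"
    unfolding U_def using Bs assms by (simp add: field_simps)
  also have "(Bs * ln U + 0 / U) / ln 2 = rho N0 Bs Ps G"
    using Bs unfolding rho_def U_def log_def by simp
  finally show ?thesis unfolding Bs_def Ps_def .
qed

text \<open>Extra bandwidth carrying no power is a summand of rate zero.\<close>
lemma rho_mono_bandwidth:
  assumes "0 \<le> b" "b \<le> b'" "0 \<le> p" "0 \<le> G" "0 < N0"
  shows "rho N0 b p G \<le> rho N0 b' p G"
proof -
  let ?b = "\<lambda>i::nat. if i = 0 then b else b' - b"
  let ?p = "\<lambda>i::nat. if i = 0 then p else 0"
  have "(\<Sum>i\<in>{0, 1}. rho N0 (?b i) (?p i) G) \<le> rho N0 (\<Sum>i\<in>{0, 1}. ?b i) (\<Sum>i\<in>{0, 1}. ?p i) G"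
    using assms by (intro sum_rho_le_rho_sum) auto
  then show ?thesis by simp
qed

lemma sum_rho_le_rho_pooled:
  assumes "finite I" "\<And>i. i \<in> I \<Longrightarrow> 0 \<le> b i \<and> 0 \<le> p i \<and> 0 \<le> G' i \<and> G' i \<le> G"
    and "(\<Sum>i\<in>I. b i) \<le> b0" "0 \<le> G" "0 < N0"
  shows "(\<Sum>i\<in>I. rho N0 (b i) (p i) (G' i)) \<le> rho N0 b0 (\<Sum>i\<in>I. p i) G"
proof -
  have "(\<Sum>i\<in>I. rho N0 (b i) (p i) (G' i)) \<le> (\<Sum>i\<in>I. rho N0 (b i) (p i) G)"
    using assms by (intro sum_mono rho_mono_gain) auto
  also have "\<dots> \<le> rho N0 (\<Sum>i\<in>I. b i) (\<Sum>i\<in>I. p i) G"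
    using assms by (intro sum_rho_le_rho_sum) auto
  also have "\<dots> \<le> rho N0 b0 (\<Sum>i\<in>I. p i) G"
    using assms by (intro rho_mono_bandwidth sum_nonneg) auto
  finally show ?thesis .
qed

lemma rho_attains_rate:
  assumes "0 \<le> w" "0 \<le> h" "0 < N0" "0 \<le> q" "0 \<le> R" "R \<le> rho N0 w q h"
  shows "\<exists>t. 0 \<le> t \<and> t \<le> q \<and> rho N0 w t h = R"
proof (cases "w = 0")
  case True
  with assms show ?thesis by auto
next
  case False
  have "isCont (\<lambda>t. rho N0 w t h) t" if "0 \<le> t" for t
  proof -
    have "0 < 1 + t * h / (w * N0)" using assms that by (simp add: add_pos_nonneg)
    then have "isCont (\<lambda>t. w * log 2 (1 + t * h / (w * N0))) t"
      using assms False by (intro continuous_intros) auto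
    with False show ?thesis unfolding rho_def by simp
  qed
  then show ?thesis using IVT[of "\<lambda>t. rho N0 w t h" 0 R q] assms by auto
qed

text \<open>Real \<open>Sup\<close> is the least upper bound even for empty or unbounded sets (where it is a junk
  value), so sets with the same upper bounds have the same \<open>Sup\<close> without boundedness assumptions.\<close>
lemma Sup_real_eq_if_cofinal:
  fixes A B :: "real set"
  assumes "\<And>a. a \<in> A \<Longrightarrow> \<exists>b\<in>B. a \<le> b" and "\<And>b. b \<in> B \<Longrightarrow> \<exists>a\<in>A. b \<le> a"
  shows "Sup A = Sup B"
proof -
  have "(\<lambda>z. \<forall>a\<in>A. a \<le> z) = (\<lambda>z. \<forall>b\<in>B. b \<le> z)"
    using assms by (fastforce intro: order_trans)
  then show ?thesis unfolding Sup_real_def by simp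
qed

lemma sum_ext:
  assumes "kp k \<in> {1..N}"
  shows "(\<Sum>n\<in>{1..N}. ext kp v k n) = v k"
  using assms unfolding ext_def by (simp add: sum.delta')

lemma sum_rho_ext:
  assumes "kp k \<in> {1..N}"
  shows "(\<Sum>n\<in>{1..N}. rho N0 (ext kp b k n) (ext kp p k n) (gkn k n))
       = rho N0 (b k) (p k) (gkn k (kp k))"
proof -
  have "(\<Sum>n\<in>{1..N}. rho N0 (ext kp b k n) (ext kp p k n) (gkn k n))
      = (\<Sum>n\<in>{1..N}. if kp k = n then rho N0 (b k) (p k) (gkn k (kp k)) else 0)"
    by (intro sum.cong) (auto simp: ext_def)
  then show ?thesis using assms by (simp add: sum.delta)
qed

lemma feas2_ext_feas1:
  assumes kp: "\<forall>k\<in>{1..K}. kp k \<in> {1..N}"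
    and F: "feas2 K N N0 Pmax Rmin W RMC h B g gkn kp pn pk bk x q w"
  shows "feas1 K N N0 Pmax Rmin W RMC h B g gkn pn (ext kp pk) (ext kp bk) x q w
     \<and> obj1 K N N0 xi Pc B g gkn pn (ext kp pk) (ext kp bk) x q w
       = obj2 K N N0 xi Pc B g gkn kp pn pk bk x q w"
proof -
  have num: "num1 K N N0 B g gkn pn (ext kp pk) (ext kp bk) x = num2 K N N0 B g gkn kp pn pk bk x"
    unfolding num1_def num2_def sum_distrib_left[symmetric]
    using kp by (intro arg_cong2[where f = "(+)"] sum.cong refl arg_cong2[where f = "(*)"] sum_rho_ext) auto
  have ext_sum: "(\<Sum>n\<in>{1..N}. ext kp v k n) = v k" if "k \<in> {1..K}" for v k
    using kp that by (intro sum_ext) auto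
  have pow: "(\<Sum>n\<in>{1..N}. \<Sum>k\<in>{1..K}. ext kp pk k n) = (\<Sum>k\<in>{1..K}. pk k)"
    by (subst sum.swap) (intro sum.cong refl ext_sum)
  have cost: "(\<Sum>n\<in>{1..N}. \<Sum>k\<in>{1..K}. x k * ext kp pk k n / xi) = (\<Sum>k\<in>{1..K}. x k * pk k / xi)"
  proof -
    have "(\<Sum>n\<in>{1..N}. \<Sum>k\<in>{1..K}. x k * ext kp pk k n / xi)
        = (\<Sum>k\<in>{1..K}. x k / xi * (\<Sum>n\<in>{1..N}. ext kp pk k n))"
      by (subst sum.swap) (simp add: sum_distrib_left)
    also have "\<dots> = (\<Sum>k\<in>{1..K}. x k / xi * pk k)"
      by (intro sum.cong refl arg_cong2[where f = "(*)"] ext_sum)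
    finally show ?thesis by simp
  qed
  show ?thesis using F num pow cost ext_sum
    unfolding feas1_def feas2_def obj1_def obj2_def by (auto simp: ext_def)
qed

lemma feas1_dominated_by_feas2:
  assumes N0: "0 < N0" and xi: "0 < xi" and Pc: "0 < Pc" and Rmin: "0 \<le> Rmin"
    and RMC_h_nonneg: "\<forall>k\<in>{1..K}. 0 \<le> RMC k \<and> 0 \<le> h k"
    and gkn_nonneg: "\<forall>k\<in>{1..K}. \<forall>n\<in>{1..N}. 0 \<le> gkn k n"
    and kp: "\<forall>k\<in>{1..K}. kp k \<in> {1..N} \<and> (\<forall>n\<in>{1..N}. gkn k n \<le> gkn k (kp k))"
    and F: "feas1 K N N0 Pmax Rmin W RMC h B g gkn pn pkn bkn x q w"
  shows "\<exists>pk bk qs. feas2 K N N0 Pmax Rmin W RMC h B g gkn kp pn pk bk x qs w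
     \<and> obj1 K N N0 xi Pc B g gkn pn pkn bkn x q w \<le> obj2 K N N0 xi Pc B g gkn kp pn pk bk x qs w"
proof -
  from F have
    C1: "(\<Sum>n\<in>{1..N}. pn n) + (\<Sum>n\<in>{1..N}. \<Sum>k\<in>{1..K}. pkn k n) + (\<Sum>k\<in>{1..K}. q k) \<le> Pmax"
    and C2: "\<forall>k\<in>{1..K}. (\<Sum>n\<in>{1..N}. bkn k n) + w k \<le> x k * W k"
    and C3: "\<forall>k\<in>{1..K}. x k * RMC k \<le> rho N0 (w k) (q k) (h k)"
    and C4: "Rmin \<le> num1 K N N0 B g gkn pn pkn bkn x"
    and C5: "\<forall>k\<in>{1..K}. x k \<in> {0, 1}"
    and C6: "\<forall>k\<in>{1..K}. \<forall>n\<in>{1..N}. 0 \<le> bkn k n" "\<forall>k\<in>{1..K}. 0 \<le> w k"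
    and C7: "\<forall>n\<in>{1..N}. 0 \<le> pn n" "\<forall>k\<in>{1..K}. \<forall>n\<in>{1..N}. 0 \<le> pkn k n"
      "\<forall>k\<in>{1..K}. 0 \<le> q k"
    unfolding feas1_def by auto
  have x: "0 \<le> x k" if "k \<in> {1..K}" for k
    using C5 that by fastforce
  have "\<forall>k\<in>{1..K}. \<exists>t. 0 \<le> t \<and> t \<le> q k \<and> rho N0 (w k) t (h k) = x k * RMC k"
    using C3 C6 C7 RMC_h_nonneg N0 x by (intro ballI rho_attains_rate) auto
  then obtain qs where qs: "\<forall>k\<in>{1..K}. 0 \<le> qs k \<and> qs k \<le> q k \<and> rho N0 (w k) (qs k) (h k) = x k * RMC k"
    by (auto dest: bchoice)
  define pk where "pk k = (\<Sum>n\<in>{1..N}. pkn k n)" for k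
  define bk where "bk k = x k * W k - w k" for k
  have pk: "0 \<le> pk k" if "k \<in> {1..K}" for k
    unfolding pk_def using C7 that by (auto intro: sum_nonneg)
  have bk: "(\<Sum>n\<in>{1..N}. bkn k n) \<le> bk k" if "k \<in> {1..K}" for k
    unfolding bk_def using C2 that by fastforce
  have "(\<Sum>n\<in>{1..N}. rho N0 (bkn k n) (pkn k n) (gkn k n)) \<le> rho N0 (bk k) (pk k) (gkn k (kp k))"
    if "k \<in> {1..K}" for k
    unfolding pk_def using that C6 C7 gkn_nonneg kp N0 bk by (intro sum_rho_le_rho_pooled) auto
  then have num: "num1 K N N0 B g gkn pn pkn bkn x \<le> num2 K N N0 B g gkn kp pn pk bk x"
    unfolding num1_def num2_def sum_distrib_left[symmetric] using x
    by (auto intro!: sum_mono mult_left_mono)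
  have pow: "(\<Sum>n\<in>{1..N}. \<Sum>k\<in>{1..K}. pkn k n) = (\<Sum>k\<in>{1..K}. pk k)"
    unfolding pk_def by (subst sum.swap) simp
  have cost: "(\<Sum>n\<in>{1..N}. \<Sum>k\<in>{1..K}. x k * pkn k n / xi) = (\<Sum>k\<in>{1..K}. x k * pk k / xi)"
    unfolding pk_def by (subst sum.swap) (simp add: sum_distrib_left sum_divide_distrib)
  have qs_sum: "(\<Sum>k\<in>{1..K}. qs k) \<le> (\<Sum>k\<in>{1..K}. q k)"
    using qs by (intro sum_mono) auto
  have feas: "feas2 K N N0 Pmax Rmin W RMC h B g gkn kp pn pk bk x qs w"
    unfolding feas2_def
  proof (intro conjI)
    show "(\<Sum>n\<in>{1..N}. pn n) + (\<Sum>k\<in>{1..K}. pk k) + (\<Sum>k\<in>{1..K}. qs k) \<le> Pmax"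
      using C1 pow qs_sum by linarith
    show "\<forall>k\<in>{1..K}. bk k \<ge> 0"
      using bk C6 sum_nonneg order_trans by meson
  qed (use C4 C5 C6 C7 num pk qs in \<open>auto simp: bk_def\<close>)
  have "(\<Sum>k\<in>{1..K}. x k * qs k / xi) \<le> (\<Sum>k\<in>{1..K}. x k * q k / xi)"
    using qs x xi by (intro sum_mono divide_right_mono mult_left_mono) auto
  moreover have "0 \<le> (\<Sum>n\<in>{1..N}. pn n / xi) + (\<Sum>k\<in>{1..K}. x k * pk k / xi)
      + (\<Sum>k\<in>{1..K}. x k * qs k / xi)"
    using C7 x pk qs xi by (intro add_nonneg_nonneg sum_nonneg) auto
  ultimately have "obj1 K N N0 xi Pc B g gkn pn pkn bkn x q w \<le> obj2 K N N0 xi Pc B g gkn kp pn pk bk x qs w"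
    unfolding obj1_def obj2_def cost using num C4 Rmin Pc by (intro frac_le) auto
  with feas show ?thesis by blast
qed

theorem theorem1:
  fixes K N :: nat
    and N0 xi Pc Pmax Rmin :: real
    and W RMC h :: "nat \<Rightarrow> real"
    and gkn :: "nat \<Rightarrow> nat \<Rightarrow> real"
    and B g :: "nat \<Rightarrow> real"
    and kp :: "nat \<Rightarrow> nat"
  assumes "N0 > 0" and "0 < xi" and "xi \<le> 1" and "Pc > 0" and "Pmax > 0" and "Rmin \<ge> 0"
    and "\<forall>k\<in>{1..K}. W k > 0 \<and> RMC k > 0 \<and> h k > 0"
    and "\<forall>k\<in>{1..K}. \<forall>n\<in>{1..N}. gkn k n > 0"
    and "\<forall>n\<in>{1..N}. B n > 0 \<and> g n > 0"
    and "N \<ge> 1"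
    and "\<forall>k\<in>{1..K}. kp k \<in> {1..N} \<and> (\<forall>n\<in>{1..N}. gkn k n \<le> gkn k (kp k))"
  shows
    "Sup {obj1 K N N0 xi Pc B g gkn pn pkn bkn x q w | pn pkn bkn x q w.
            feas1 K N N0 Pmax Rmin W RMC h B g gkn pn pkn bkn x q w}
     = Sup {obj2 K N N0 xi Pc B g gkn kp pn pk bk x q w | pn pk bk x q w.
            feas2 K N N0 Pmax Rmin W RMC h B g gkn kp pn pk bk x q w}
   \<and> (\<forall>pn pk bk x q w.
        feas2 K N N0 Pmax Rmin W RMC h B g gkn kp pn pk bk x q w
      \<and> (\<forall>pn' pk' bk' x' q' w'. feas2 K N N0 Pmax Rmin W RMC h B g gkn kp pn' pk' bk' x' q' w' \<longrightarrow>
            obj2 K N N0 xi Pc B g gkn kp pn' pk' bk' x' q' w' \<le> obj2 K N N0 xi Pc B g gkn kp pn pk bk x q w)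
      \<longrightarrow>
        feas1 K N N0 Pmax Rmin W RMC h B g gkn pn (ext kp pk) (ext kp bk) x q w
      \<and> (\<forall>pn' pkn' bkn' x' q' w'. feas1 K N N0 Pmax Rmin W RMC h B g gkn pn' pkn' bkn' x' q' w' \<longrightarrow>
            obj1 K N N0 xi Pc B g gkn pn' pkn' bkn' x' q' w' \<le> obj1 K N N0 xi Pc B g gkn pn (ext kp pk) (ext kp bk) x q w))"
proof -
  have RMC_h_nonneg: "\<forall>k\<in>{1..K}. 0 \<le> RMC k \<and> 0 \<le> h k" and gkn_nonneg: "\<forall>k\<in>{1..K}. \<forall>n\<in>{1..N}. 0 \<le> gkn k n"
    and kp_range: "\<forall>k\<in>{1..K}. kp k \<in> {1..N}"
    using assms(7,8,11) by (auto simp: less_imp_le)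
  note to_P1 = feas2_ext_feas1[OF kp_range, where xi = xi and Pc = Pc]
  note to_P2 = feas1_dominated_by_feas2[OF assms(1,2,4,6) RMC_h_nonneg gkn_nonneg assms(11)]
  show ?thesis
    apply (intro conjI allI impI Sup_real_eq_if_cofinal)
    subgoal by (elim CollectE exE conjE, drule to_P2) blast
    subgoal by (elim CollectE exE conjE, drule to_P1) force
    subgoal by (blast dest: to_P1)
    \<comment> \<open>a point of (P1) is dominated by one of (P2), hence by the (P2) optimum, whose extension
      has the same value\<close>
    subgoal by (elim conjE, frule to_P1, drule to_P2, elim exE conjE) (smt (verit))
    done
qed

end
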